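(* Let $\mathbb{F}_q$ be a finite field and let $s,t\ge1$ be coprime integers. Then the linear code $C=\bigoplus_{i=1}^{s}\mathrm{Rep}_t(\mathbb{F}_q)\le\mathbb{F}_q^{st}$ is a cyclic group code.
   Context: $\mathrm{Rep}_t(\mathbb{F}_q)=\{(\lambda,\dots,\lambda):\lambda\in\mathbb{F}_q\}\le\mathbb{F}_q^t$ is the repetition code; the direct sum consists of concatenations of $s$ constant blocks of length $t$. Let $\mathcal{B}=\{e_1,\dots,e_n\}$ be the standard basis of $\mathbb{F}_q^n$. For a finite group $H$ of order $n$, a linear code $C\le\mathbb{F}_q^n$ is an $H$-code if there exists a bijection $\phi:\mathcal{B}\to H$ whose $\mathbb{F}_q$-linear extension $\tilde\phi:\mathbb{F}_q^n\to\mathbb{F}_q[H]$ maps $C$ onto a two-sided ideal of $\mathbb{F}_q[H]$. $C$ is a cyclic group code if it is an $H$-code for some cyclic group $H$. *)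

theory Defs
  imports "HOL-Algebra.Elementary_Groups"
begin

text \<open>Vectors of F_q^n are modelled as functions nat => 'a (coordinate i is
  the coefficient of the basis vector e_(i+1), i < n); the standard basis is
  indexed by {0..<n}.\<close>

definition rep_code :: "nat \<Rightarrow> (nat \<Rightarrow> 'a::field) set" where
  "rep_code t = {v. \<exists>c. (\<forall>i<t. v i = c) \<and> (\<forall>i\<ge>t. v i = 0)}"

text \<open>Direct sum of s copies of Rep_t: concatenations of s blocks of length t,
  block k occupying coordinates k*t, ..., k*t+t-1.\<close>
definition rep_sum_code :: "nat \<Rightarrow> nat \<Rightarrow> (nat \<Rightarrow> 'a::field) set" where
  "rep_sum_code s t = {v. (\<forall>i\<ge>s*t. v i = 0) \<and>
      (\<forall>k<s. (\<lambda>j. if j < t then v (k*t + j) else 0) \<in> rep_code t)}"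

definition group_alg :: "('g, 'b) monoid_scheme \<Rightarrow> ('g \<Rightarrow> 'a::field) set" where
  "group_alg H = {a. \<forall>g. g \<notin> carrier H \<longrightarrow> a g = 0}"

definition group_alg_mult ::
  "('g, 'b) monoid_scheme \<Rightarrow> ('g \<Rightarrow> 'a::field) \<Rightarrow> ('g \<Rightarrow> 'a) \<Rightarrow> ('g \<Rightarrow> 'a)" where
  "group_alg_mult H a b = (\<lambda>g. if g \<in> carrier H then
      (\<Sum>h\<in>carrier H. a h * b (inv\<^bsub>H\<^esub> h \<otimes>\<^bsub>H\<^esub> g)) else 0)"

definition two_sided_ideal :: "('g, 'b) monoid_scheme \<Rightarrow> ('g \<Rightarrow> 'a::field) set \<Rightarrow> bool" where
  "two_sided_ideal H I \<longleftrightarrow> I \<subseteq> group_alg H \<and> (\<lambda>_. 0) \<in> I \<and>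
     (\<forall>x\<in>I. \<forall>y\<in>I. (\<lambda>g. x g + y g) \<in> I) \<and> (\<forall>x\<in>I. (\<lambda>g. - x g) \<in> I) \<and>
     (\<forall>a\<in>group_alg H. \<forall>x\<in>I. group_alg_mult H a x \<in> I \<and> group_alg_mult H x a \<in> I)"

text \<open>Linear extension of phi : {e_1..e_n} -> H to F^n -> F[H]:
  v = sum v_i e_i is mapped to sum v_i phi(e_i).\<close>
definition lin_ext :: "nat \<Rightarrow> (nat \<Rightarrow> 'g) \<Rightarrow> (nat \<Rightarrow> 'a::field) \<Rightarrow> ('g \<Rightarrow> 'a)" where
  "lin_ext n \<phi> v = (\<lambda>g. \<Sum>i\<in>{0..<n}. if \<phi> i = g then v i else 0)"

definition is_H_code :: "('g, 'b) monoid_scheme \<Rightarrow> nat \<Rightarrow> (nat \<Rightarrow> 'a::field) set \<Rightarrow> bool" where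
  "is_H_code H n C \<longleftrightarrow> group H \<and> finite (carrier H) \<and> card (carrier H) = n \<and>
     (\<exists>\<phi>. bij_betw \<phi> {0..<n} (carrier H) \<and> two_sided_ideal H (lin_ext n \<phi> ` C))"

text \<open>Cyclic group code (group elements realised in type nat; every finite
  group is isomorphic to one with carrier in nat).\<close>
definition is_cyclic_group_code :: "nat \<Rightarrow> (nat \<Rightarrow> 'a::field) set \<Rightarrow> bool" where
  "is_cyclic_group_code n C \<longleftrightarrow>
     (\<exists>H :: nat monoid. cyclic_group H \<and> is_H_code H n C)"

end

theory Submission
  imports Defs
begin

text \<open>Send position \<open>k * t + j\<close> of \<open>F\<^sup>s\<^sup>t\<close> (block \<open>k\<close>, offset \<open>j\<close>) to the residue
  \<open>k + s * j\<close> of \<open>\<int>/st\<close>. Block \<open>k\<close> is then mapped onto the coset \<open>k + \<langle>s\<rangle>\<close> of the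
  subgroup of order \<open>t\<close>, so the code becomes the space of functions on \<open>\<int>/st\<close> that are
  constant on the cosets of \<open>\<langle>s\<rangle>\<close>, i.e. invariant under translation by \<open>s\<close>. Convolution
  with anything preserves this invariance, and the group algebra is commutative, so this
  space is a two-sided ideal.\<close>

definition nat_mod_group :: "nat \<Rightarrow> nat monoid" where
  "nat_mod_group n = \<lparr>carrier = {0..<n}, monoid.mult = (\<lambda>a b. (a + b) mod n), one = 0\<rparr>"

lemma carrier_nat_mod_group [simp]: "carrier (nat_mod_group n) = {0..<n}"
  by (simp add: nat_mod_group_def)

lemma mult_nat_mod_group [simp]: "x \<otimes>\<^bsub>nat_mod_group n\<^esub> y = (x + y) mod n"
  by (simp add: nat_mod_group_def)

lemma group_nat_mod_group:
  assumes "0 < n"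
  shows "group (nat_mod_group n)"
proof (rule groupI)
  fix x assume "x \<in> carrier (nat_mod_group n)"
  then show "\<exists>y\<in>carrier (nat_mod_group n). y \<otimes>\<^bsub>nat_mod_group n\<^esub> x = \<one>\<^bsub>nat_mod_group n\<^esub>"
    using assms by (intro bexI[of _ "(n - x) mod n"]) (auto simp: nat_mod_group_def mod_add_left_eq)
qed (use assms in \<open>auto simp: nat_mod_group_def mod_add_left_eq mod_add_right_eq add.assoc\<close>)

lemma cyclic_group_nat_mod_group:
  assumes "0 < n"
  shows "cyclic_group (nat_mod_group n)"
proof -
  define h where "h k = nat (k mod int n)" for k
  have "h \<in> hom integer_group (nat_mod_group n)"
  proof (rule homI)
    fix a b :: int
    show "h a \<in> carrier (nat_mod_group n)"
      using assms by (simp add: h_def nat_less_iff)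
    have "int (h (a + b)) = int ((h a + h b) mod n)"
      using assms by (simp add: h_def of_nat_mod mod_add_eq)
    then show "h (a \<otimes>\<^bsub>integer_group\<^esub> b) = h a \<otimes>\<^bsub>nat_mod_group n\<^esub> h b"
      by (simp add: integer_group_def)
  qed
  moreover have "h ` UNIV = {0..<n}"
  proof (intro equalityI subsetI)
    fix x assume "x \<in> {0..<n}"
    then have "h (int x) = x" by (simp add: h_def flip: of_nat_mod)
    then show "x \<in> h ` UNIV" by (metis rangeI)
  qed (use assms in \<open>auto simp: h_def nat_less_iff\<close>)
  ultimately have "h \<in> epi integer_group (nat_mod_group n)"
    by (simp add: epi_def integer_group_def)
  then show ?thesis
    using group.cyclic_group_epimorphic_image[OF group_integer_group]
      group_nat_mod_group[OF assms] by simp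
qed

lemma group_alg_mult_commute:
  fixes H (structure)
  assumes "comm_group H"
  shows "group_alg_mult H a b = group_alg_mult H b a"
proof -
  interpret comm_group H by fact
  have "(\<Sum>h\<in>carrier H. a h * b (inv h \<otimes> g)) = (\<Sum>h\<in>carrier H. b h * a (inv h \<otimes> g))"
    if g: "g \<in> carrier H" for g
  proof -
    have involution: "inv (inv k \<otimes> g) \<otimes> g = k" if "k \<in> carrier H" for k
      using that g by (simp add: inv_mult m_assoc)
    show ?thesis
      by (rule sum.reindex_bij_witness[where i = "\<lambda>k. inv k \<otimes> g" and j = "\<lambda>k. inv k \<otimes> g"])
        (use g involution in \<open>auto simp: mult.commute\<close>)
  qed
  then show ?thesis by (auto simp: group_alg_mult_def)
qed

definition periodic_functions :: "nat \<Rightarrow> nat \<Rightarrow> (nat \<Rightarrow> 'a::zero) set" where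
  "periodic_functions n s = {f. (\<forall>g\<ge>n. f g = 0) \<and> (\<forall>g<n. f g = f (g mod s))}"

lemma periodic_functionsI:
  assumes "\<And>g. n \<le> g \<Longrightarrow> f g = 0" and "\<And>g. g < n \<Longrightarrow> f g = f (g mod s)"
  shows "f \<in> periodic_functions n s"
  using assms by (simp add: periodic_functions_def)

lemma periodic_functionsD:
  assumes "f \<in> periodic_functions n s"
  shows "n \<le> g \<Longrightarrow> f g = 0" and "g < n \<Longrightarrow> f g = f (g mod s)"
  using assms by (simp_all add: periodic_functions_def)

lemma group_alg_mult_periodic_functions:
  assumes "0 < n" and "s dvd n" and x: "x \<in> periodic_functions n s"
  shows "group_alg_mult (nat_mod_group n) a x \<in> periodic_functions n s"
proof (rule periodic_functionsI)
  let ?G = "nat_mod_group n"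
  have translate: "x ((u + g) mod n) = x ((u + g mod s) mod n)" for u g
  proof -
    have "x ((u + g) mod n) = x ((u + g) mod n mod s)"
      using assms(1) by (intro periodic_functionsD(2)[OF x]) simp
    also have "(u + g) mod n mod s = (u + g mod s) mod n mod s"
      using \<open>s dvd n\<close> by (simp add: mod_mod_cancel mod_add_right_eq)
    also have "x \<dots> = x ((u + g mod s) mod n)"
      using assms(1) by (intro periodic_functionsD(2)[OF x, symmetric]) simp
    finally show ?thesis .
  qed
  fix g assume "g < n"
  moreover have "g mod s < n"
    using \<open>g < n\<close> by (meson le_less_trans mod_less_eq_dividend)
  ultimately show "group_alg_mult ?G a x g = group_alg_mult ?G a x (g mod s)"
    \<comment> \<open>instantiated, since \<open>translate\<close> as a general rewrite rule loops on \<open>g mod s\<close>\<close>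
    by (simp add: group_alg_mult_def translate[of _ g])
qed (simp add: group_alg_mult_def)

lemma two_sided_ideal_periodic_functions:
  assumes "0 < n" and "s dvd n"
  shows "two_sided_ideal (nat_mod_group n) (periodic_functions n s :: (nat \<Rightarrow> 'a::field) set)"
  unfolding two_sided_ideal_def
proof (intro conjI ballI)
  have "comm_group (nat_mod_group n)"
    using assms(1) by (simp add: group.cyclic_imp_abelian_group group_nat_mod_group
        cyclic_group_nat_mod_group)
  then show "group_alg_mult (nat_mod_group n) x a \<in> periodic_functions n s"
    and "group_alg_mult (nat_mod_group n) a x \<in> periodic_functions n s"
    if "x \<in> periodic_functions n s" for a x :: "nat \<Rightarrow> 'a"
    using group_alg_mult_periodic_functions[OF assms that] group_alg_mult_commute by metis+
qed (auto simp: periodic_functions_def group_alg_def)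

definition transpose_index :: "nat \<Rightarrow> nat \<Rightarrow> nat \<Rightarrow> nat" where
  "transpose_index s t i = i div t + s * (i mod t)"

lemma transpose_index_block:
  assumes "j < t"
  shows "transpose_index s t (k * t + j) = k + s * j"
  using assms by (simp add: transpose_index_def)

lemma transpose_index_less:
  assumes "i < s * t"
  shows "transpose_index s t i < s * t"
proof -
  have "i div t < s" and "i mod t < t"
    using assms by (auto simp: less_mult_imp_div_less intro!: mod_less_divisor gr0I)
  then have "transpose_index s t i \<le> (s - 1) + s * (t - 1)"
    unfolding transpose_index_def by (intro add_mono) auto
  also have "\<dots> < s * t"
    using \<open>i div t < s\<close> \<open>i mod t < t\<close> by (simp add: algebra_simps)
  finally show ?thesis .
qed

lemma transpose_index_transpose_index:
  assumes "i < s * t"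
  shows "transpose_index t s (transpose_index s t i) = i"
proof -
  have "i div t < s"
    using assms by (simp add: less_mult_imp_div_less)
  then show ?thesis
    by (simp add: transpose_index_def)
qed

lemma bij_betw_transpose_index:
  "bij_betw (transpose_index s t) {0..<s * t} {0..<s * t}"
proof (rule bij_betwI[where g = "transpose_index t s"])
  have swap: "t * s = s * t" by (rule mult.commute)
  show "transpose_index s t \<in> {0..<s * t} \<rightarrow> {0..<s * t}"
    using transpose_index_less by auto
  show "transpose_index t s \<in> {0..<s * t} \<rightarrow> {0..<s * t}"
    using transpose_index_less[of _ t s] by (auto simp: swap)
  show "transpose_index t s (transpose_index s t i) = i" if "i \<in> {0..<s * t}" for i
    using that by (simp add: transpose_index_transpose_index)
  show "transpose_index s t (transpose_index t s g) = g" if "g \<in> {0..<s * t}" for g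
    using that transpose_index_transpose_index[of g t s] by (simp add: swap)
qed

lemma lin_ext_apply:
  assumes "inj_on \<phi> {0..<n}" and "i < n"
  shows "lin_ext n \<phi> v (\<phi> i) = v i"
proof -
  have "lin_ext n \<phi> v (\<phi> i) = (\<Sum>j\<in>{0..<n}. if j = i then v j else 0)"
    unfolding lin_ext_def using assms by (intro sum.cong) (auto dest: inj_onD)
  then show ?thesis
    using assms(2) by simp
qed

lemma lin_ext_outside:
  assumes "g \<notin> \<phi> ` {0..<n}"
  shows "lin_ext n \<phi> v g = 0"
  using assms by (auto simp: lin_ext_def intro!: sum.neutral)

lemma lin_ext_transpose_index:
  assumes "g < s * t"
  shows "lin_ext (s * t) (transpose_index s t) v g = v (transpose_index t s g)"
proof -
  have "transpose_index t s g < s * t" and "transpose_index s t (transpose_index t s g) = g"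
    using assms transpose_index_less[of g t s] transpose_index_transpose_index[of g t s]
    by (simp_all add: mult.commute)
  then show ?thesis
    using lin_ext_apply[OF bij_betw_imp_inj_on[OF bij_betw_transpose_index]] by metis
qed

lemma lin_ext_transpose_index_beyond:
  assumes "s * t \<le> g"
  shows "lin_ext (s * t) (transpose_index s t) v g = 0"
  using assms bij_betw_imp_surj_on[OF bij_betw_transpose_index, of s t]
  by (intro lin_ext_outside) auto

lemma rep_sum_code_iff:
  "v \<in> rep_sum_code s t \<longleftrightarrow>
     (\<forall>i\<ge>s * t. v i = 0) \<and> (\<forall>k<s. \<forall>j<t. v (k * t + j) = v (k * t))"
proof -
  have "(\<exists>c. \<forall>j<t. v (k * t + j) = c) \<longleftrightarrow> (\<forall>j<t. v (k * t + j) = v (k * t))" for k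
    by (metis add.right_neutral gr_zeroI not_less0)
  then show ?thesis
    by (simp add: rep_sum_code_def rep_code_def)
qed

lemma lin_ext_transpose_index_periodic:
  assumes "v \<in> rep_sum_code s t"
  shows "lin_ext (s * t) (transpose_index s t) v \<in> periodic_functions (s * t) s"
proof (rule periodic_functionsI)
  let ?f = "lin_ext (s * t) (transpose_index s t) v"
  fix g assume g: "g < s * t"
  then have "s \<noteq> 0" by (cases s) auto
  then have "g div s < t" and "g mod s < s"
    using g by (simp_all add: less_mult_imp_div_less mult.commute)
  moreover have "g mod s < s * t"
    using g by (meson le_less_trans mod_less_eq_dividend)
  ultimately have "?f g = v ((g mod s) * t + g div s)" and "?f (g mod s) = v ((g mod s) * t)"
    using g by (simp_all add: lin_ext_transpose_index transpose_index_def ac_simps)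
  then show "?f g = ?f (g mod s)"
    using assms \<open>g div s < t\<close> \<open>g mod s < s\<close> by (simp add: rep_sum_code_iff)
qed (rule lin_ext_transpose_index_beyond)

lemma periodic_in_lin_ext_transpose_index:
  assumes f: "f \<in> periodic_functions (s * t) s"
  shows "f \<in> lin_ext (s * t) (transpose_index s t) ` rep_sum_code s t"
proof
  define v where "v i = (if i < s * t then f (transpose_index s t i) else 0)" for i
  have "v (k * t + j) = f k" if "k < s" and "j < t" for k j
  proof -
    have "k * t + j < Suc k * t"
      using \<open>j < t\<close> by simp
    also have "\<dots> \<le> s * t"
      using \<open>k < s\<close> by (intro mult_le_mono1) simp
    finally have "k * t + j < s * t" .
    then have "k + s * j < s * t"
      using transpose_index_less transpose_index_block[OF \<open>j < t\<close>] by metis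
    moreover have "(k + s * j) mod s = k"
      using \<open>k < s\<close> by simp
    ultimately show ?thesis
      using \<open>k * t + j < s * t\<close> periodic_functionsD(2)[OF f, of "k + s * j"]
      by (simp add: v_def transpose_index_block[OF \<open>j < t\<close>])
  qed
  then have "v (k * t + j) = v (k * t)" if "k < s" and "j < t" for k j
    using that by (metis add_0_right gr0I not_less0)
  then show "v \<in> rep_sum_code s t"
    by (simp add: rep_sum_code_iff v_def)
  show "f = lin_ext (s * t) (transpose_index s t) v"
  proof
    fix g
    show "f g = lin_ext (s * t) (transpose_index s t) v g"
    proof (cases "g < s * t")
      case True
      then show ?thesis
        using transpose_index_less[of g t s] transpose_index_transpose_index[of g t s]
        by (simp add: lin_ext_transpose_index v_def mult.commute)
    qed (simp add: lin_ext_transpose_index_beyond periodic_functionsD(1)[OF f])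
  qed
qed

lemma lin_ext_transpose_index_rep_sum_code:
  "lin_ext (s * t) (transpose_index s t) ` rep_sum_code s t = periodic_functions (s * t) s"
  using lin_ext_transpose_index_periodic periodic_in_lin_ext_transpose_index by blast

theorem corollary2p1:
  fixes s t :: nat
  assumes "s \<ge> 1" and "t \<ge> 1" and "coprime s t"
  shows "is_cyclic_group_code (s * t) (rep_sum_code s t :: (nat \<Rightarrow> 'a::{field,finite}) set)"
proof -
  have "0 < s * t"
    using assms(1,2) by simp
  then have "group (nat_mod_group (s * t))" and "cyclic_group (nat_mod_group (s * t))"
    and "two_sided_ideal (nat_mod_group (s * t))
           (lin_ext (s * t) (transpose_index s t) ` (rep_sum_code s t :: (nat \<Rightarrow> 'a) set))"
    by (simp_all add: group_nat_mod_group cyclic_group_nat_mod_group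
        lin_ext_transpose_index_rep_sum_code two_sided_ideal_periodic_functions)
  then show ?thesis
    unfolding is_cyclic_group_code_def is_H_code_def
    using bij_betw_transpose_index by fastforce
qed

end
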